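(* Assume $q\ge3$. Then $BC(0)=1$, and for every positive integer $n$ divisible by $q-1$ and every $\lambda\in\mathbb{F}_q$, \[ (1-(\theta-\lambda)^n)\,BC(n)=\sum_{\substack{\beta\in\mathbb{N}^{q-1}\\ n-|q^\beta|\ge0}}\left[\begin{matrix} n\\ n-|q^\beta|,\ |q^\beta|\end{matrix}\right](\theta-\lambda)^{n-1-|q^\beta|}\,BC(n-|q^\beta|). \]
   Context: $A=\mathbb{F}_q[\theta]$, $K=\mathbb{F}_q(\theta)$. $D_i$ is the product of all monic polynomials of degree $i$ in $A$, and $e_C(z)=\sum_{j\ge0}z^{q^j}/D_j$. For $n=\sum_i n_iq^i$ written in base $q$ ($0\le n_i\le q-1$), the Carlitz factorial is $\Pi(n)=\prod_i D_i^{n_i}$, and for non-negative integers $n,k_1,\dots,k_j$, $\left[\begin{smallmatrix} n\\ k_1,\dots,k_j\end{smallmatrix}\right]=\Pi(n)/(\Pi(k_1)\cdots\Pi(k_j))\in K$. The Bernoulli–Carlitz numbers $BC(n)\in K$, for $n\ge0$ divisible by $q-1$, are defined by $z/e_C(z)=\sum_{n\ge0,\,(q-1)\mid n}\frac{BC(n)}{\Pi(n)}z^n$. For $\beta\in\mathbb{N}^{q-1}$, $|q^\beta|=\sum_i q^{\beta_i}$. *)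

theory Defs
  imports "HOL-Computational_Algebra.Computational_Algebra" "HOL-Library.Cardinality"
begin

text \<open>Throughout, the finite field F_q is a type 'a of class {field, finite}, q = CARD('a);
  A = 'a poly, K = 'a poly fract, and \<theta> is the polynomial variable [:0,1:].\<close>

definition Dpoly :: "nat \<Rightarrow> 'a::{field,finite} poly" where
  "Dpoly i = (\<Prod>p\<in>{p::'a poly. lead_coeff p = 1 \<and> degree p = i}. p)"

definition Dfr :: "nat \<Rightarrow> 'a::{field,finite} poly fract" where
  "Dfr i = to_fract (Dpoly i)"

text \<open>Carlitz factorial: \<Pi>(n) = \<Prod>_i D_i^{n_i}, n_i the base-q digits of n
  (digits with index i > n vanish since q^i > n).\<close>
definition CPi :: "nat \<Rightarrow> 'a::{field,finite} poly fract" where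
  "CPi n = (\<Prod>i\<le>n. Dfr i ^ ((n div (CARD('a) ^ i)) mod CARD('a)))"

definition Cbinom :: "nat \<Rightarrow> nat list \<Rightarrow> 'a::{field,finite} poly fract" where
  "Cbinom n ks = CPi n / (\<Prod>k\<leftarrow>ks. (CPi k :: 'a poly fract))"

text \<open>Carlitz exponential e_C(z) = \<Sum>_j z^{q^j}/D_j as a formal power series over K.\<close>
definition carlitz_exp :: "'a::{field,finite} poly fract fps" where
  "carlitz_exp = Abs_fps (\<lambda>m. if (\<exists>j. m = CARD('a) ^ j)
        then inverse (Dfr (THE j. m = CARD('a) ^ j) :: 'a poly fract) else 0)"

definition BC :: "nat \<Rightarrow> 'a::{field,finite} poly fract" where
  "BC n = CPi n * fps_nth (fps_X / (carlitz_exp :: 'a poly fract fps)) n"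

definition theta :: "'a::{field,finite} poly fract" where
  "theta = to_fract [:0, 1:]"

text \<open>|q^\<beta>| for \<beta> \<in> \<nat>^{q-1}, \<beta> represented as a function on {0..<q-1}.\<close>
definition qabs :: "'a::{field,finite} itself \<Rightarrow> (nat \<Rightarrow> nat) \<Rightarrow> nat" where
  "qabs _ \<beta> = (\<Sum>i<CARD('a) - 1. CARD('a) ^ \<beta> i)"

end

theory Submission
  imports Defs
begin

(* Write e = e_C, B(z) = z / e(z) = \<Sum> BC(n)/\<Pi>(n) z^n and t = \<theta> - \<lambda> with \<lambda> \<in> F_q.
   The key input is the functional equation e(t z) = t e(z) + e(z)^q, which coefficientwise
   is the Carlitz recursion D_{j+1} = [j+1] D_j^q with [j] = \<theta>^(q^j) - \<theta> (note that
   t^(q^j) - t = [j]).  Writing e(z)^q = e(z) P(z) with P = e^(q-1), one gets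
   B(t z) (t + P(z)) = t B(z); comparing coefficients of z^n yields
   (1 - t^n) t B_n = \<Sum>_j P_j t^(n-j) B_(n-j).  For q - 1 < q factors the base-q digits
   of |q^\<beta>| do not carry, so \<Pi>(|q^\<beta>|) = \<Prod>_i D_{\<beta>_i} and P_j counts the \<beta> with
   |q^\<beta>| = j, weighted by 1/\<Pi>(j); this turns the recursion into the claimed identity.

   The identity in fact holds for every n and q. *)

lemma card_field_ge_2: "CARD('a::{field,finite}) \<ge> 2"
proof -
  have "card {0::'a, 1} \<le> CARD('a)" by (intro card_mono) auto
  thus ?thesis by simp
qed

(* Fermat's little theorem for the finite field: multiplication by a nonzero x
   permutes the nonzero elements, hence x^(q-1) = 1. *)
lemma power_card_eq: "(x::'a::{field,finite}) ^ CARD('a) = x"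
proof (cases "x = 0")
  case True
  thus ?thesis using card_field_ge_2[where 'a='a] by simp
next
  case False
  define U where "U = UNIV - {0::'a}"
  have cardU: "card U = CARD('a) - 1" by (simp add: U_def card_Diff_subset)
  have "(\<Prod>y\<in>U. x * y) = (\<Prod>y\<in>U. y)"
    by (rule prod.reindex_bij_witness[of _ "\<lambda>y. y / x" "\<lambda>y. x * y"]) (use False in \<open>auto simp: U_def\<close>)
  hence "x ^ (CARD('a) - 1) * (\<Prod>y\<in>U. y) = 1 * (\<Prod>y\<in>U. y)"
    by (simp add: prod.distrib cardU)
  moreover have "(\<Prod>y\<in>U. y) \<noteq> 0" by (simp add: U_def)
  ultimately have "x ^ (CARD('a) - 1) = 1" by (metis mult_right_cancel)
  moreover have "x ^ CARD('a) = x * x ^ (CARD('a) - 1)"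
    using card_field_ge_2[where 'a='a] by (simp flip: power_Suc)
  ultimately show ?thesis by simp
qed

lemma power_card_power_eq: "(x::'a::{field,finite}) ^ (CARD('a) ^ j) = x"
  by (induction j) (simp_all add: power_card_eq power_mult mult.commute[of "CARD('a)"])

(* The binomial coefficients (q choose k), 0 < k < q, vanish in the field:
   (1 + X)^q and X^q + 1 have degree q and agree at all q points of the field. *)
lemma CHAR_dvd_card_choose:
  assumes "0 < k" "k < CARD('a::{field,finite})"
  shows "CHAR('a) dvd (CARD('a) choose k)"
proof -
  define q where "q = CARD('a)"
  have q2: "q \<ge> 2" using card_field_ge_2[where 'a='a] by (simp add: q_def)
  have "[:1,1:] ^ q = (monom 1 q + 1 :: 'a poly)"
  proof (rule poly_eqI_degree_lead_coeff[where n=q and A=UNIV])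
    show "coeff ([:1,1:] ^ q) q = coeff (monom 1 q + 1 :: 'a poly) q"
      using q2 by (simp add: coeff_linear_poly_power)
    show "q \<le> card (UNIV::'a set)" by (simp add: q_def)
    show "degree ([:1, 1:] ^ q :: 'a poly) \<le> q"
      by (rule order.trans[OF degree_power_le]) simp
    show "degree (monom 1 q + 1 :: 'a poly) \<le> q"
      by (metis degree_add_le degree_monom_le degree_1 le0 dual_order.trans)
    show "poly ([:1, 1:] ^ q) z = poly (monom 1 q + 1) z" for z :: 'a
      by (simp add: poly_monom q_def power_card_eq add.commute)
  qed
  hence "coeff ([:1,1:] ^ q :: 'a poly) k = coeff (monom 1 q + 1 :: 'a poly) k" by simp
  hence "of_nat (q choose k) = (0::'a)"
    using assms by (simp add: coeff_linear_poly_power coeff_monom q_def)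
  thus ?thesis by (simp add: of_nat_eq_0_iff_char_dvd q_def)
qed

lemma of_nat_fract_eq_to_fract: "(of_nat n :: 'a::idom fract) = to_fract (of_nat n)"
  by (simp add: to_fract_def of_nat_fract)

lemma CHAR_fract [simp]: "CHAR('a::idom fract) = CHAR('a)"
  by (rule CHAR_eqI) (simp_all add: of_nat_fract_eq_to_fract of_nat_eq_0_iff_char_dvd)

(* Frobenius x \<mapsto> x^q is additive in every ring of the same characteristic as the
   field (e.g. A, K and K[[z]]), since the intermediate binomial coefficients vanish. *)
lemma frobenius_add:
  fixes x y :: "'b::comm_semiring_1"
  assumes "CHAR('b) = CHAR('a::{field,finite})"
  shows "(x + y) ^ CARD('a) = x ^ CARD('a) + y ^ CARD('a)"
proof -
  define q where "q = CARD('a)"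
  have "(x + y) ^ q = (\<Sum>k\<le>q. of_nat (q choose k) * x ^ k * y ^ (q - k))"
    by (rule binomial_ring)
  also have "\<dots> = (\<Sum>k\<in>{0,q}. of_nat (q choose k) * x ^ k * y ^ (q - k))"
  proof (intro sum.mono_neutral_right ballI)
    fix k assume "k \<in> {..q} - {0, q}"
    hence "CHAR('b) dvd (q choose k)"
      using CHAR_dvd_card_choose[of k, where 'a='a] assms by (auto simp: q_def)
    thus "of_nat (q choose k) * x ^ k * y ^ (q - k) = 0"
      by (simp add: of_nat_eq_0_iff_char_dvd[symmetric])
  qed auto
  finally show ?thesis
    using card_field_ge_2[where 'a='a] by (simp add: q_def add_ac)
qed

lemma frobenius_diff:
  fixes x y :: "'b::comm_ring_1"
  assumes "CHAR('b) = CHAR('a::{field,finite})"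
  shows "(x - y) ^ CARD('a) = x ^ CARD('a) - y ^ CARD('a)"
  using frobenius_add[OF assms, of "x - y" y] by (simp add: algebra_simps)

lemma frobenius_power_diff:
  fixes x y :: "'b::comm_ring_1"
  assumes "CHAR('b) = CHAR('a::{field,finite})"
  shows "(x - y) ^ (CARD('a) ^ j) = x ^ (CARD('a) ^ j) - y ^ (CARD('a) ^ j)"
  by (induction j) (simp_all add: power_mult frobenius_diff[OF assms] mult.commute[of "CARD('a)"])

lemma frobenius_sum:
  fixes f :: "'c \<Rightarrow> 'b::comm_semiring_1"
  assumes "CHAR('b) = CHAR('a::{field,finite})"
  shows "sum f A ^ CARD('a) = (\<Sum>i\<in>A. f i ^ CARD('a))"
  using card_field_ge_2[where 'a='a]
  by (induction A rule: infinite_finite_induct) (auto simp: frobenius_add[OF assms] power_0_left)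

definition polys_below :: "nat \<Rightarrow> 'a::zero poly set" where
  "polys_below j = {p. \<forall>i\<ge>j. coeff p i = 0}"

lemma polys_below_0: "polys_below 0 = {0}"
  by (auto simp: polys_below_def poly_eq_iff)

lemma polys_below_Suc:
  "polys_below (Suc j) = (\<lambda>(v, c). v + monom c j) ` (polys_below j \<times> (UNIV :: 'a::comm_ring_1 set))"
proof (intro equalityI subsetI)
  fix p :: "'a poly" assume p: "p \<in> polys_below (Suc j)"
  have "p - monom (coeff p j) j \<in> polys_below j"
    using p by (auto simp: polys_below_def coeff_monom)
  thus "p \<in> (\<lambda>(v, c). v + monom c j) ` (polys_below j \<times> UNIV)"
    by (intro image_eqI[of _ _ "(p - monom (coeff p j) j, coeff p j)"]) auto
qed (auto simp: polys_below_def coeff_monom)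

lemma inj_on_polys_below_Suc:
  "inj_on (\<lambda>(v, c). v + monom c j) (polys_below j \<times> (UNIV :: 'a::comm_ring_1 set))"
proof (rule inj_onI, clarsimp)
  fix v v' :: "'a poly" and c c'
  assume v: "v \<in> polys_below j" "v' \<in> polys_below j" and eq: "v + monom c j = v' + monom c' j"
  have "coeff (v + monom c j) j = coeff (v' + monom c' j) j" by (simp only: eq)
  hence "c = c'" using v by (simp add: polys_below_def)
  with eq show "v = v' \<and> c = c'" by simp
qed

lemma finite_polys_below: "finite (polys_below j :: 'a::{comm_ring_1,finite} poly set)"
  by (induction j) (simp_all add: polys_below_0 polys_below_Suc)

lemma monic_polys_eq:
  "{p::'a::field poly. lead_coeff p = 1 \<and> degree p = i} = (\<lambda>v. monom 1 i + v) ` polys_below i"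
proof (intro equalityI subsetI)
  fix p :: "'a poly" assume "p \<in> {p. lead_coeff p = 1 \<and> degree p = i}"
  hence "p - monom 1 i \<in> polys_below i"
    by (auto simp: polys_below_def coeff_monom coeff_eq_0)
  thus "p \<in> (\<lambda>v. monom 1 i + v) ` polys_below i"
    by (intro image_eqI[of _ _ "p - monom 1 i"]) auto
next
  fix p :: "'a poly" assume "p \<in> (\<lambda>v. monom 1 i + v) ` polys_below i"
  then obtain v where v: "v \<in> polys_below i" and p: "p = monom 1 i + v" by auto
  have ci: "coeff p i = 1" using v by (simp add: p polys_below_def)
  have "degree p \<le> i" using v by (intro degree_le) (auto simp: p polys_below_def coeff_monom)
  moreover have "i \<le> degree p" using ci by (intro le_degree) auto
  ultimately show "p \<in> {p. lead_coeff p = 1 \<and> degree p = i}" using ci by simp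
qed

(* Product over the F_q-multiples of a: \<Prod>_c (y - c a) = y^q - a^(q-1) y.
   Both sides are monic of degree q in y and vanish at the q points c a. *)
lemma prod_translates:
  fixes y a :: "'a::{field,finite} poly"
  shows "(\<Prod>c\<in>UNIV. y - smult c a) = y ^ CARD('a) - a ^ (CARD('a) - 1) * y"
proof (cases "a = 0")
  case True
  thus ?thesis using card_field_ge_2[where 'a='a] by simp
next
  case False
  define q where "q = CARD('a)"
  have q2: "q \<ge> 2" using card_field_ge_2[where 'a='a] by (simp add: q_def)
  define P1 :: "'a poly poly" where "P1 = (\<Prod>c\<in>UNIV. [:- smult c a, 1:])"
  define P2 :: "'a poly poly" where "P2 = monom 1 q - [:0, a ^ (q - 1):]"
  have inj: "inj (\<lambda>c::'a. smult c a)"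
    using False by (intro injI) (metis diff_eq_eq smult_diff_left smult_eq_0_iff add_0)
  have "P1 = P2"
  proof (rule poly_eqI_degree_lead_coeff[where n=q and A="range (\<lambda>c. smult c a)"])
    have "degree P1 = q"
      unfolding P1_def by (subst degree_prod_eq_sum_degree) (auto simp: q_def)
    moreover have "lead_coeff P1 = 1"
      unfolding P1_def by (simp add: lead_coeff_prod)
    moreover obtain k where "q = Suc (Suc k)" using q2 by (metis add_2_eq_Suc le_Suc_ex)
    ultimately show "coeff P1 q = coeff P2 q" "degree P1 \<le> q"
      by (simp_all add: P2_def)
    show "q \<le> card (range (\<lambda>c. smult c a))"
      using inj by (simp add: card_image q_def)
    show "degree P2 \<le> q" unfolding P2_def
      by (rule order.trans[OF degree_diff_le_max]) (use q2 in \<open>auto simp: degree_monom_le\<close>)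
    fix z assume "z \<in> range (\<lambda>c. smult c a)"
    then obtain c where z: "z = smult c a" by auto
    have "poly P1 z = 0"
      unfolding P1_def poly_prod by (subst prod_zero_iff) (auto simp: z)
    moreover have "a ^ (q - 1) * z = z ^ q"
      using q2 by (simp add: z smult_power q_def power_card_eq mult_smult_right
                    flip: power_Suc2)
    hence "poly P2 z = 0" by (simp add: P2_def poly_monom mult.commute)
    ultimately show "poly P1 z = poly P2 z" by simp
  qed
  hence "poly P1 y = poly P2 y" by simp
  thus ?thesis by (simp add: P1_def P2_def poly_prod poly_monom q_def)
qed

(* psi j is the F_q-linear polynomial function with zero set V_j (see prod_polys_below);
   its recursion is the classical one for \<Prod>_{v \<in> V_j} (x - v). *)
fun psi :: "nat \<Rightarrow> 'a::{field,finite} poly \<Rightarrow> 'a poly" where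
  "psi 0 x = x"
| "psi (Suc j) x = psi j x ^ CARD('a) - psi j (monom 1 j) ^ (CARD('a) - 1) * psi j x"

(* psi j is F_q-linear: additive by Frobenius, homogeneous since c^q = c for c \<in> F_q. *)
lemma psi_add: "psi j (x + y) = psi j x + psi j y"
  by (induction j arbitrary: x y) (simp_all add: frobenius_add algebra_simps)

lemma psi_smult: "psi j (smult c x) = smult c (psi j x)"
  by (induction j arbitrary: x)
     (simp_all add: smult_power power_card_eq mult_smult_right smult_diff_right)

lemma psi_diff: "psi j (x - y) = psi j x - psi j y"
  using psi_add[of j x "-y"] psi_smult[of j "-1" y] by simp

(* psi j x = \<Prod>_{v \<in> V_j} (x - v): group V_{j+1} into the cosets v + V_j,
   v \<in> F_q \<theta>^j, and use F_q-linearity of psi j together with prod_translates. *)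
lemma prod_polys_below: "(\<Prod>v\<in>polys_below j. x - v) = psi j x"
proof (induction j arbitrary: x)
  case 0
  show ?case by (simp add: polys_below_0)
next
  case (Suc j)
  have "(\<Prod>v\<in>polys_below (Suc j). x - v) = (\<Prod>(v, c)\<in>polys_below j \<times> UNIV. x - (v + monom c j))"
    unfolding polys_below_Suc by (subst prod.reindex[OF inj_on_polys_below_Suc]) (simp add: case_prod_beta)
  also have "\<dots> = (\<Prod>c\<in>UNIV. \<Prod>v\<in>polys_below j. (x - monom c j) - v)"
    by (subst prod.swap) (simp add: prod.cartesian_product algebra_simps)
  also have "\<dots> = (\<Prod>c\<in>UNIV. psi j x - smult c (psi j (monom 1 j)))"
    by (simp add: Suc psi_diff smult_monom flip: psi_smult)
  also have "\<dots> = psi (Suc j) x"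
    by (simp add: prod_translates)
  finally show ?case .
qed

lemma psi_polys_below: "v \<in> polys_below j \<Longrightarrow> psi j v = 0"
  by (subst prod_polys_below[symmetric]) (auto simp: finite_polys_below)

(* D_i is the product over \<theta>^i + V_i, hence D_i = psi_i(\<theta>^i). *)
lemma Dpoly_eq_psi: "(Dpoly i :: 'a::{field,finite} poly) = psi i (monom 1 i)"
proof -
  have "Dpoly i = (\<Prod>v\<in>polys_below i. monom 1 i + v :: 'a poly)"
    unfolding Dpoly_def monic_polys_eq by (subst prod.reindex) (auto intro: inj_onI)
  also have "\<dots> = (\<Prod>v\<in>polys_below i. monom 1 i - v)"
    by (rule prod.reindex_bij_witness[of _ uminus uminus]) (auto simp: polys_below_def)
  finally show ?thesis by (simp add: prod_polys_below)
qed

definition bracket :: "nat \<Rightarrow> 'a::{field,finite} poly" where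
  "bracket j = monom 1 1 ^ (CARD('a) ^ j) - monom 1 1"

lemma bracket_Suc: "(bracket (Suc j) :: 'a::{field,finite} poly) = bracket 1 + bracket j ^ CARD('a)"
  by (simp add: bracket_def frobenius_diff power_mult[symmetric] mult.commute)

lemma psi_mult_theta_step:
  fixes x :: "'a::{field,finite} poly"
  defines "\<theta> \<equiv> monom 1 1 :: 'a poly" and "q \<equiv> CARD('a)"
  assumes IH_x: "psi (Suc j) (\<theta> * x) = \<theta> * psi (Suc j) x + bracket (Suc j) * psi j x ^ q"
      and IH_D: "psi (Suc j) (monom 1 (Suc j) :: 'a poly) = bracket (Suc j) * psi j (monom 1 j) ^ q"
  shows "psi (Suc (Suc j)) (\<theta> * x) - \<theta> * psi (Suc (Suc j)) x = bracket (Suc (Suc j)) * psi (Suc j) x ^ q"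
proof -
  define a b E D \<beta> where "a = psi (Suc j) x" and "b = psi j x" and "E = psi j (monom 1 j :: 'a poly)"
    and "D = psi (Suc j) (monom 1 (Suc j) :: 'a poly)" and "\<beta> = (bracket (Suc j) :: 'a poly)"
  have q1: "q = Suc (q - 1)" using card_field_ge_2[where 'a='a] by (simp add: q_def)
  have a_eq: "a = b ^ q - E ^ (q - 1) * b" by (simp add: a_def b_def E_def q_def)
  have D_eq: "D = \<beta> * E ^ q" using IH_D by (simp add: D_def \<beta>_def E_def)
  have frob: "(u + v) ^ q = u ^ q + v ^ q" "(u - v) ^ q = u ^ q - v ^ q" for u v :: "'a poly"
    by (simp_all add: q_def frobenius_add frobenius_diff)
  have "D ^ (q - 1) * \<beta> = (\<beta> ^ (q - 1) * \<beta>) * (E ^ q) ^ (q - 1)"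
    by (simp add: D_eq power_mult_distrib mult_ac)
  also have "\<beta> ^ (q - 1) * \<beta> = \<beta> ^ q"
    by (subst (2) q1) (simp add: mult.commute)
  also have "(E ^ q) ^ (q - 1) = (E ^ (q - 1)) ^ q"
    by (simp add: mult.commute flip: power_mult)
  finally have "D ^ (q - 1) * (\<beta> * b ^ q) = \<beta> ^ q * ((E ^ (q - 1)) ^ q * b ^ q)"
    by (metis mult.assoc)
  hence "\<beta> ^ q * (b ^ q) ^ q - D ^ (q - 1) * (\<beta> * b ^ q) = \<beta> ^ q * ((b ^ q) ^ q - (E ^ (q - 1)) ^ q * b ^ q)"
    by (simp add: right_diff_distrib)
  also have "\<dots> = \<beta> ^ q * a ^ q"
    by (simp add: a_eq frob power_mult_distrib)
  finally have key: "\<beta> ^ q * (b ^ q) ^ q - D ^ (q - 1) * (\<beta> * b ^ q) = \<beta> ^ q * a ^ q" .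
  have "psi (Suc (Suc j)) (\<theta> * x) - \<theta> * psi (Suc (Suc j)) x
      = (\<theta> * a + \<beta> * b ^ q) ^ q - D ^ (q - 1) * (\<theta> * a + \<beta> * b ^ q) - \<theta> * (a ^ q - D ^ (q - 1) * a)"
    using IH_x by (simp add: a_def b_def D_def \<beta>_def q_def)
  also have "\<dots> = (\<theta> ^ q - \<theta>) * a ^ q + (\<beta> ^ q * (b ^ q) ^ q - D ^ (q - 1) * (\<beta> * b ^ q))"
    by (simp add: frob power_mult_distrib algebra_simps)
  also have "\<dots> = (bracket 1 + \<beta> ^ q) * a ^ q"
    unfolding key by (simp add: bracket_def \<theta>_def q_def algebra_simps)
  also have "\<dots> = bracket (Suc (Suc j)) * psi (Suc j) x ^ q"
    by (simp add: bracket_Suc[of "Suc j"] a_def \<beta>_def q_def)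
  finally show ?thesis .
qed

(* The commutation rule psi_{j+1}(\<theta> x) - \<theta> psi_{j+1}(x) = [j+1] psi_j(x)^q, proved
   simultaneously with the recursion for psi_{j+1}(\<theta>^{j+1}); the latter follows from the
   former at x = \<theta>^j, because psi_{j+1} vanishes on \<theta>^j \<in> V_{j+1}. *)
lemma psi_mult_theta:
  "(\<forall>x::'a::{field,finite} poly. psi (Suc j) (monom 1 1 * x) - monom 1 1 * psi (Suc j) x
        = bracket (Suc j) * psi j x ^ CARD('a))
   \<and> psi (Suc j) (monom 1 (Suc j)) = bracket (Suc j) * psi j (monom 1 j :: 'a poly) ^ CARD('a)"
proof (induction j)
  case 0
  show ?case by (simp add: bracket_def power_mult_distrib algebra_simps mult_monom)
next
  case (Suc j)
  have step: "psi (Suc (Suc j)) (monom 1 1 * x) - monom 1 1 * psi (Suc (Suc j)) x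
        = bracket (Suc (Suc j)) * psi (Suc j) x ^ CARD('a)" for x :: "'a poly"
    using Suc.IH by (intro psi_mult_theta_step) (auto simp: algebra_simps)
  have "psi (Suc (Suc j)) (monom 1 (Suc j) :: 'a poly) = 0"
    by (rule psi_polys_below) (simp add: polys_below_def coeff_monom)
  hence "psi (Suc (Suc j)) (monom 1 (Suc (Suc j))) = bracket (Suc (Suc j)) * psi (Suc j) (monom 1 (Suc j) :: 'a poly) ^ CARD('a)"
    using step[of "monom 1 (Suc j)"] by (simp add: mult_monom)
  with step show ?case by blast
qed

lemma Dpoly_Suc: "(Dpoly (Suc j) :: 'a::{field,finite} poly) = bracket (Suc j) * Dpoly j ^ CARD('a)"
  using psi_mult_theta[of j, where 'a='a] by (simp add: Dpoly_eq_psi)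

lemma Dpoly_0: "(Dpoly 0 :: 'a::{field,finite} poly) = 1"
  by (simp add: Dpoly_eq_psi)

lemma Dpoly_nonzero: "(Dpoly j :: 'a::{field,finite} poly) \<noteq> 0"
proof -
  have "monom 1 j + v \<noteq> 0" if "v \<in> polys_below j" for v :: "'a poly"
  proof
    assume "monom 1 j + v = 0"
    hence "coeff (monom 1 j + v) j = 0" by simp
    with that show False by (simp add: polys_below_def)
  qed
  thus ?thesis
    unfolding Dpoly_def monic_polys_eq by (subst prod_zero_iff) (auto simp: finite_polys_below)
qed

lemma base_q_digit:
  fixes q e a c h :: nat
  assumes "a < q ^ e" "c < q"
  shows "((a + q ^ e * (c + q * h)) div q ^ e) mod q = c"
proof -
  have "(a + q ^ e * (c + q * h)) div q ^ e = c + q * h"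
    using assms by simp
  thus ?thesis using assms(2) by simp
qed

lemma power_sum_split:
  fixes q e :: nat and g :: "nat \<Rightarrow> nat"
  shows "(\<Sum>i<k. q ^ g i) = (\<Sum>i<k. if g i < e then q ^ g i else 0)
           + q ^ e * (card {i. i < k \<and> g i = e} + q * (\<Sum>i<k. if e < g i then q ^ (g i - Suc e) else 0))"
proof -
  have split: "q ^ g i = (if g i < e then q ^ g i else 0) + (if g i = e then q ^ e else 0)
                 + q ^ e * (q * (if e < g i then q ^ (g i - Suc e) else 0))" for i
  proof -
    have "e < g i \<Longrightarrow> q ^ e * (q * q ^ (g i - Suc e)) = q ^ g i"
      by (simp flip: power_Suc power_add)
    thus ?thesis by auto
  qed
  have "(\<Sum>i<k. if g i = e then q ^ e else 0) = q ^ e * card {i. i < k \<and> g i = e}"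
    by (simp add: sum.If_cases Int_def conj_commute)
  thus ?thesis
    by (simp add: split sum.distrib sum_distrib_left algebra_simps)
qed

lemma low_power_sum_less:
  fixes q e :: nat and g :: "nat \<Rightarrow> nat"
  assumes "k < q"
  shows "(\<Sum>i<k. if g i < e then q ^ g i else 0) < q ^ e"
proof (cases e)
  case 0
  thus ?thesis by simp
next
  case (Suc e')
  have "(\<Sum>i<k. if g i < e then q ^ g i else 0) \<le> (\<Sum>i<k. q ^ e')"
    using assms Suc by (intro sum_mono) (auto intro: power_increasing)
  also have "\<dots> = k * q ^ e'" by simp
  also have "\<dots> < q ^ e" using assms Suc by simp
  finally show ?thesis .
qed

lemma digit_of_power_sum:
  fixes q e :: nat and g :: "nat \<Rightarrow> nat"
  assumes "k < q"
  shows "((\<Sum>i<k. q ^ g i) div q ^ e) mod q = card {i. i < k \<and> g i = e}"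
proof -
  have "card {i. i < k \<and> g i = e} \<le> card {..<k}" by (rule card_mono) auto
  hence "card {i. i < k \<and> g i = e} < q" using assms by simp
  thus ?thesis
    by (subst power_sum_split[where e=e]) (intro base_q_digit low_power_sum_less assms)
qed

lemma exponent_less_power_sum:
  fixes q :: nat and g :: "nat \<Rightarrow> nat"
  assumes "2 \<le> q" "i < k"
  shows "g i < (\<Sum>l<k. q ^ g l)"
proof -
  have "g i < 2 ^ g i" by (rule less_exp)
  also have "\<dots> \<le> q ^ g i" using assms(1) by (rule power_mono) simp
  also have "\<dots> \<le> (\<Sum>l<k. q ^ g l)" by (rule member_le_sum) (use assms(2) in auto)
  finally show ?thesis .
qed

lemma CPi_power_sum:
  assumes "k < CARD('a::{field,finite})"
  shows "(CPi (\<Sum>i<k. CARD('a) ^ g i) :: 'a poly fract) = (\<Prod>i<k. Dfr (g i))"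
proof -
  define q where "q = CARD('a)"
  define N where "N = (\<Sum>i<k. q ^ g i)"
  have "g i \<le> N" if "i < k" for i
    using exponent_less_power_sum[of q i k g] card_field_ge_2[where 'a='a] that
    by (simp add: N_def q_def)
  hence "(\<Prod>i<k. Dfr (g i) :: 'a poly fract) = (\<Prod>e\<le>N. \<Prod>i\<in>{i. i < k \<and> g i = e}. Dfr (g i))"
    by (subst prod.group[symmetric, where g=g and T="{..N}"]) auto
  also have "\<dots> = (\<Prod>e\<le>N. Dfr e ^ card {i. i < k \<and> g i = e})"
    by (intro prod.cong refl) simp
  also have "\<dots> = CPi N"
    unfolding CPi_def N_def using assms by (simp add: digit_of_power_sum q_def)
  finally show ?thesis by (simp add: N_def q_def)
qed

lemma to_fract_power: "to_fract (x ^ n) = to_fract x ^ n"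
  by (induction n) simp_all

lemma Dfr_nonzero: "(Dfr j :: 'a::{field,finite} poly fract) \<noteq> 0"
  by (simp add: Dfr_def Dpoly_nonzero)

lemma Dfr_0: "(Dfr 0 :: 'a::{field,finite} poly fract) = 1"
  by (simp add: Dfr_def Dpoly_0)

lemma Dfr_Suc: "(Dfr (Suc j) :: 'a::{field,finite} poly fract) = to_fract (bracket (Suc j)) * Dfr j ^ CARD('a)"
  by (simp add: Dfr_def Dpoly_Suc to_fract_power)

lemma CPi_nonzero: "(CPi n :: 'a::{field,finite} poly fract) \<noteq> 0"
  by (simp add: CPi_def Dfr_nonzero)

lemma CPi_0: "(CPi 0 :: 'a::{field,finite} poly fract) = 1"
  by (simp add: CPi_def)

lemma fps_power_nth_agree:
  fixes f g :: "'b::comm_semiring_1 fps"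
  assumes "\<And>i. i \<le> m \<Longrightarrow> f $ i = g $ i"
  shows "(f ^ k) $ m = (g ^ k) $ m"
proof -
  have "\<forall>i\<le>m. (f ^ k) $ i = (g ^ k) $ i"
  proof (induction k)
    case (Suc k)
    show ?case
      using Suc.IH assms by (auto simp: fps_mult_nth intro!: sum.cong)
  qed simp
  thus ?thesis by simp
qed

lemma fps_frobenius_nth:
  fixes f :: "'b::comm_semiring_1 fps"
  assumes "CHAR('b) = CHAR('a::{field,finite})"
  shows "(f ^ CARD('a)) $ m = (if CARD('a) dvd m then (f $ (m div CARD('a))) ^ CARD('a) else 0)"
proof -
  define q where "q = CARD('a)"
  have q2: "q \<ge> 2" using card_field_ge_2[where 'a='a] by (simp add: q_def)
  define g where "g = (\<Sum>i\<le>m. fps_const (f $ i) * fps_X ^ i)"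
  have "(f ^ q) $ m = (g ^ q) $ m"
    by (rule fps_power_nth_agree) (simp add: g_def fps_sum_nth mult_delta_right sum.delta')
  also have "g ^ q = (\<Sum>i\<le>m. fps_const ((f $ i) ^ q) * fps_X ^ (i * q))"
    unfolding g_def q_def using assms
    by (simp add: frobenius_sum power_mult_distrib power_mult)
  also have "\<dots> $ m = (\<Sum>i\<le>m. if i = m div q \<and> q dvd m then (f $ i) ^ q else 0)"
    unfolding fps_sum_nth using q2 by (intro sum.cong) auto
  also have "\<dots> = (if q dvd m then (f $ (m div q)) ^ q else 0)"
    by (simp add: sum.delta)
  finally show ?thesis by (simp add: q_def)
qed

lemma carlitz_exp_nth_power: "(carlitz_exp :: 'a::{field,finite} poly fract fps) $ (CARD('a) ^ j) = inverse (Dfr j)"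
proof -
  have "(THE j'. CARD('a) ^ j = CARD('a) ^ j') = j"
    using card_field_ge_2[where 'a='a] by (auto simp: power_inject_exp)
  thus ?thesis by (auto simp: carlitz_exp_def)
qed

lemma carlitz_exp_nth_other:
  "\<nexists>j. m = CARD('a) ^ j \<Longrightarrow> (carlitz_exp :: 'a::{field,finite} poly fract fps) $ m = 0"
  by (simp add: carlitz_exp_def)

lemma carlitz_exp_nth_0: "(carlitz_exp :: 'a::{field,finite} poly fract fps) $ 0 = 0"
  by (rule carlitz_exp_nth_other) simp

lemma carlitz_exp_nth_1: "(carlitz_exp :: 'a::{field,finite} poly fract fps) $ 1 = 1"
  using carlitz_exp_nth_power[of 0, where 'a='a] by (simp add: Dfr_0)

lemma carlitz_exp_power_card_nth:
  "((carlitz_exp :: 'a::{field,finite} poly fract fps) ^ CARD('a)) $ (CARD('a) ^ Suc j)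
     = inverse (Dfr j) ^ CARD('a)"
proof -
  have "CARD('a) dvd CARD('a) ^ Suc j" by simp
  moreover have "CARD('a) ^ Suc j div CARD('a) = CARD('a) ^ j"
    using card_field_ge_2[where 'a='a] by simp
  ultimately show ?thesis
    by (simp only: fps_frobenius_nth CHAR_fract semiring_char_poly carlitz_exp_nth_power if_True)
qed

lemma carlitz_exp_power_card_nth_other:
  assumes "\<nexists>j. m = CARD('a) ^ Suc j"
  shows "((carlitz_exp :: 'a::{field,finite} poly fract fps) ^ CARD('a)) $ m = 0"
proof (cases "CARD('a) dvd m")
  case True
  have "\<nexists>j. m div CARD('a) = CARD('a) ^ j"
  proof
    assume "\<exists>j. m div CARD('a) = CARD('a) ^ j"
    then obtain j where "m div CARD('a) = CARD('a) ^ j" by blast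
    hence "m = CARD('a) ^ Suc j"
      using True by (metis dvd_div_mult_self power_Suc2)
    with assms show False by blast
  qed
  hence "(carlitz_exp :: 'a poly fract fps) $ (m div CARD('a)) = 0"
    by (rule carlitz_exp_nth_other)
  with True show ?thesis
    using card_field_ge_2[where 'a='a] by (simp add: fps_frobenius_nth)
qed (simp add: fps_frobenius_nth)

lemma theta_shift_power:
  fixes c :: "'a::{field,finite}"
  shows "(theta - to_fract [:c:]) ^ (CARD('a) ^ j) - (theta - to_fract [:c:]) = (to_fract (bracket j) :: 'a poly fract)"
proof -
  define X :: "'a poly" where "X = [:0, 1:]"
  have "(X - [:c:]) ^ (CARD('a) ^ j) = X ^ (CARD('a) ^ j) - [:c:]"
    using frobenius_power_diff[of X "[:c:]" j, where 'a='a]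
    by (simp only: semiring_char_poly poly_const_pow power_card_power_eq simp_thms)
  moreover have "monom 1 1 = X" by (simp add: X_def monom_Suc one_pCons)
  ultimately have "(X - [:c:]) ^ (CARD('a) ^ j) - (X - [:c:]) = bracket j"
    unfolding bracket_def by (metis diff_diff_eq2 diff_add_cancel)
  hence "to_fract (X - [:c:]) ^ (CARD('a) ^ j) - to_fract (X - [:c:]) = to_fract (bracket j)"
    by (metis to_fract_diff to_fract_power)
  moreover have "theta - to_fract [:c:] = to_fract (X - [:c:])"
    by (simp only: theta_def X_def to_fract_diff)
  ultimately show ?thesis by (simp only:)
qed

(* The functional equation e_C(t z) = t e_C(z) + e_C(z)^q for t = \<theta> - \<lambda>,
   which coefficientwise is exactly the Carlitz recursion D_{j+1} = [j+1] D_j^q. *)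
lemma carlitz_exp_functional_equation:
  fixes c :: "'a::{field,finite}"
  defines "t \<equiv> theta - to_fract [:c:] :: 'a poly fract"
  shows "carlitz_exp oo (fps_const t * fps_X) = fps_const t * carlitz_exp + carlitz_exp ^ CARD('a)"
proof (rule fps_ext)
  fix m
  define q where "q = CARD('a)"
  define e where "e = (carlitz_exp :: 'a poly fract fps)"
  have q2: "q \<ge> 2" using card_field_ge_2[where 'a='a] by (simp add: q_def)
  consider (one) "m = 1" | (power) j where "m = q ^ Suc j" | (other) "\<nexists>j. m = q ^ j"
    by (metis not0_implies_Suc power_0)
  hence "t ^ m * e $ m = t * e $ m + (e ^ q) $ m"
  proof cases
    case one
    have "(e ^ q) $ m = 0"
      using q2 one by (auto simp: e_def q_def intro!: carlitz_exp_power_card_nth_other)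
    moreover have "e $ m = 1"
      unfolding one e_def by (rule carlitz_exp_nth_1)
    ultimately show ?thesis by (simp add: one)
  next
    case (power j)
    have bracket_nz: "to_fract (bracket (Suc j) :: 'a poly) \<noteq> 0"
      using Dfr_Suc[of j, where 'a='a] Dfr_nonzero[of "Suc j", where 'a='a] by auto
    have "t ^ m - t = to_fract (bracket (Suc j))"
      unfolding power t_def q_def by (rule theta_shift_power)
    hence "(t ^ m - t) * inverse (Dfr (Suc j)) = to_fract (bracket (Suc j)) * inverse (to_fract (bracket (Suc j)) * Dfr j ^ q)"
      by (simp only: Dfr_Suc q_def)
    also have "\<dots> = inverse (Dfr j) ^ q"
      using bracket_nz by (simp add: power_inverse)
    moreover have "e $ m = inverse (Dfr (Suc j))" "(e ^ q) $ m = inverse (Dfr j) ^ q"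
      unfolding power e_def q_def by (rule carlitz_exp_nth_power carlitz_exp_power_card_nth)+
    ultimately show ?thesis by (simp add: algebra_simps)
  next
    case other
    thus ?thesis
      by (auto simp: e_def q_def carlitz_exp_nth_other intro!: carlitz_exp_power_card_nth_other)
  qed
  thus "(carlitz_exp oo (fps_const t * fps_X)) $ m = (fps_const t * carlitz_exp + carlitz_exp ^ CARD('a)) $ m"
    by (simp add: e_def q_def)
qed

definition carlitz_exp_trunc :: "nat \<Rightarrow> 'a::{field,finite} poly fract fps" where
  "carlitz_exp_trunc N = (\<Sum>l<N. fps_const (inverse (Dfr l)) * fps_X ^ (CARD('a) ^ l))"

lemma carlitz_exp_trunc_nth:
  assumes "m < CARD('a::{field,finite}) ^ N"
  shows "(carlitz_exp_trunc N :: 'a poly fract fps) $ m = carlitz_exp $ m"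
proof (cases "\<exists>l. m = CARD('a) ^ l")
  case True
  then obtain l where l: "m = CARD('a) ^ l" by blast
  have inj: "CARD('a) ^ l = CARD('a) ^ l' \<longleftrightarrow> l = l'" for l'
    using card_field_ge_2[where 'a='a] by (simp add: power_inject_exp)
  have "l < N" using assms card_field_ge_2[where 'a='a] by (simp add: l power_strict_increasing_iff)
  thus ?thesis
    by (simp add: carlitz_exp_trunc_def fps_sum_nth l inj carlitz_exp_nth_power if_distrib sum.delta cong: if_cong)
next
  case False
  thus ?thesis
    by (auto simp: carlitz_exp_trunc_def fps_sum_nth carlitz_exp_nth_other intro!: sum.neutral)
qed

lemma fps_const_prod: "(\<Prod>i\<in>A. fps_const (f i)) = fps_const (\<Prod>i\<in>A. f i)"
  by (induction A rule: infinite_finite_induct) (simp_all add: fps_const_mult)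

lemma carlitz_exp_trunc_power:
  fixes N k :: nat
  defines "q \<equiv> CARD('a::{field,finite})"
  shows "(carlitz_exp_trunc N :: 'a poly fract fps) ^ k
    = (\<Sum>\<gamma>\<in>PiE {..<k} (\<lambda>_. {..<N}). fps_const (\<Prod>i<k. inverse (Dfr (\<gamma> i))) * fps_X ^ (\<Sum>i<k. q ^ \<gamma> i))"
proof -
  have "(carlitz_exp_trunc N :: 'a poly fract fps) ^ k
      = (\<Prod>i<k. \<Sum>l<N. fps_const (inverse (Dfr l)) * fps_X ^ (q ^ l))"
    by (simp add: carlitz_exp_trunc_def q_def)
  also have "\<dots> = (\<Sum>\<gamma>\<in>PiE {..<k} (\<lambda>_. {..<N}). \<Prod>i<k. fps_const (inverse (Dfr (\<gamma> i))) * fps_X ^ (q ^ \<gamma> i))"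
    by (rule prod_sum_PiE) auto
  also have "\<dots> = (\<Sum>\<gamma>\<in>PiE {..<k} (\<lambda>_. {..<N}). fps_const (\<Prod>i<k. inverse (Dfr (\<gamma> i))) * fps_X ^ (\<Sum>i<k. q ^ \<gamma> i))"
    by (simp add: prod.distrib power_sum flip: fps_const_prod)
  finally show ?thesis .
qed

lemma carlitz_exp_power_nth:
  fixes k j :: nat
  defines "q \<equiv> CARD('a::{field,finite})"
  assumes "k < q"
  shows "((carlitz_exp :: 'a poly fract fps) ^ k) $ j
     = (\<Sum>\<gamma>\<in>{\<gamma>. \<gamma> \<in> {..<k} \<rightarrow>\<^sub>E UNIV \<and> (\<Sum>i<k. q ^ \<gamma> i) = j}. inverse (CPi j))"
proof -
  have q2: "2 \<le> q" using card_field_ge_2[where 'a='a] by (simp add: q_def)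
  let ?\<Gamma> = "{\<gamma>. \<gamma> \<in> {..<k} \<rightarrow>\<^sub>E UNIV \<and> (\<Sum>i<k. q ^ \<gamma> i) = j}"
  have "i < q ^ Suc j" if "i \<le> j" for i
  proof -
    have "i < 2 ^ Suc j" using that less_exp[of "Suc j"] by linarith
    also have "\<dots> \<le> q ^ Suc j" using q2 by (rule power_mono) simp
    finally show ?thesis .
  qed
  hence "((carlitz_exp :: 'a poly fract fps) ^ k) $ j = (carlitz_exp_trunc (Suc j) ^ k) $ j"
    by (intro fps_power_nth_agree) (simp add: carlitz_exp_trunc_nth q_def)
  also have "\<dots> = (\<Sum>\<gamma>\<in>PiE {..<k} (\<lambda>_. {..<Suc j}).
                      if (\<Sum>i<k. q ^ \<gamma> i) = j then (\<Prod>i<k. inverse (Dfr (\<gamma> i))) else 0)"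
    unfolding carlitz_exp_trunc_power fps_sum_nth q_def by (intro sum.cong refl) simp
  also have "\<dots> = (\<Sum>\<gamma>\<in>{\<gamma>\<in>PiE {..<k} (\<lambda>_. {..<Suc j}). (\<Sum>i<k. q ^ \<gamma> i) = j}. \<Prod>i<k. inverse (Dfr (\<gamma> i)))"
    by (rule sum.inter_filter[symmetric]) (simp add: finite_PiE)
  also have "{\<gamma>\<in>PiE {..<k} (\<lambda>_. {..<Suc j}). (\<Sum>i<k. q ^ \<gamma> i) = j} = ?\<Gamma>"
  proof (intro equalityI subsetI)
    fix \<gamma> assume \<gamma>: "\<gamma> \<in> ?\<Gamma>"
    have "\<gamma> i < Suc j" if "i < k" for i
      using exponent_less_power_sum[OF q2 that, of \<gamma>] \<gamma> by simp
    with \<gamma> show "\<gamma> \<in> {\<gamma>\<in>PiE {..<k} (\<lambda>_. {..<Suc j}). (\<Sum>i<k. q ^ \<gamma> i) = j}"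
      by (auto simp: PiE_iff)
  qed (auto simp: PiE_iff)
  also have "(\<Sum>\<gamma>\<in>?\<Gamma>. \<Prod>i<k. inverse (Dfr (\<gamma> i))) = (\<Sum>\<gamma>\<in>?\<Gamma>. inverse (CPi j) :: 'a poly fract)"
  proof (intro sum.cong refl)
    fix \<gamma> assume "\<gamma> \<in> ?\<Gamma>"
    hence "CPi j = (\<Prod>i<k. Dfr (\<gamma> i) :: 'a poly fract)"
      using CPi_power_sum[of k \<gamma>, where 'a='a] assms(2) by (simp add: q_def)
    moreover have "(\<Prod>i<k. inverse (Dfr (\<gamma> i))) = inverse (\<Prod>i<k. Dfr (\<gamma> i) :: 'a poly fract)"
      using prod_inversef[of "\<lambda>i. Dfr (\<gamma> i)" "{..<k}"] by (simp add: o_def)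
    ultimately show "(\<Prod>i<k. inverse (Dfr (\<gamma> i))) = (inverse (CPi j) :: 'a poly fract)"
      by simp
  qed
  finally show ?thesis .
qed

(* Formal heart of the proof. If B e = z and e(t z) = t e(z) + e(z) P(z), then
   B(t z) (t + P(z)) = t B(z); comparing coefficients of z^n gives a recursion for B. *)
lemma scaled_quotient_coeff:
  fixes e B P :: "'b::field fps" and t :: 'b
  assumes quot: "B * e = fps_X" and "e \<noteq> 0"
      and scale: "e oo (fps_const t * fps_X) = fps_const t * e + e * P"
  shows "t * B $ n - t ^ Suc n * B $ n = (\<Sum>j\<le>n. P $ j * (t ^ (n - j) * B $ (n - j)))"
proof -
  define S where "S = fps_const t * fps_X"
  have S0: "S $ 0 = 0" by (simp add: S_def)
  have "e * ((B oo S) * (fps_const t + P)) = (B oo S) * (e oo S)"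
    unfolding S_def scale by (simp add: algebra_simps)
  also have "\<dots> = (B * e) oo S" by (simp add: fps_compose_mult_distrib[OF S0])
  also have "\<dots> = e * (fps_const t * B)"
    using quot S0 by (simp add: S_def mult_ac)
  finally have "(B oo S) * (fps_const t + P) = fps_const t * B"
    using \<open>e \<noteq> 0\<close> by simp
  hence "((B oo S) * fps_const t) $ n + (P * (B oo S)) $ n = (fps_const t * B) $ n"
    by (metis distrib_left fps_add_nth mult.commute)
  hence "t ^ n * B $ n * t + (\<Sum>j=0..n. P $ j * (t ^ (n - j) * B $ (n - j))) = t * B $ n"
    by (simp add: S_def fps_mult_nth[of P])
  thus ?thesis by (simp add: atLeast0AtMost algebra_simps)
qed

lemma carlitz_exp_subdegree: "subdegree (carlitz_exp :: 'a::{field,finite} poly fract fps) = 1"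
  using carlitz_exp_nth_0[where 'a='a] carlitz_exp_nth_1[where 'a='a] by (intro subdegreeI) auto

lemma carlitz_exp_nonzero: "(carlitz_exp :: 'a::{field,finite} poly fract fps) \<noteq> 0"
  using carlitz_exp_nth_1[where 'a='a] by auto

(* z / e_C(z) is a genuine quotient, since e_C has order 1. *)
lemma carlitz_quotient_mult: "fps_X / carlitz_exp * (carlitz_exp :: 'a::{field,finite} poly fract fps) = fps_X"
  by (rule fps_times_divide_eq) (simp_all add: carlitz_exp_nonzero carlitz_exp_subdegree)

(* BC(0) = 1, because z / e_C(z) has constant term 1/e_1 = 1. *)
lemma BC_0: "(BC 0 :: 'a::{field,finite} poly fract) = 1"
proof -
  have "(fps_X / carlitz_exp * (carlitz_exp :: 'a poly fract fps)) $ 1 = 1"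
    by (simp add: carlitz_quotient_mult)
  hence "(fps_X / (carlitz_exp :: 'a poly fract fps)) $ 0 = 1"
    by (simp add: fps_mult_nth carlitz_exp_nth_0 carlitz_exp_nth_1[unfolded One_nat_def] atLeast0_atMost_Suc)
  thus ?thesis by (simp add: BC_def CPi_0)
qed

lemma sum_by_power_sum:
  fixes q k n :: nat and G :: "nat \<Rightarrow> 'b::comm_monoid_add"
  assumes "2 \<le> q"
  shows "(\<Sum>\<beta>\<in>{\<beta>. \<beta> \<in> {..<k} \<rightarrow>\<^sub>E UNIV \<and> (\<Sum>i<k. q ^ \<beta> i) \<le> n}. G (\<Sum>i<k. q ^ \<beta> i))
       = (\<Sum>j\<le>n. \<Sum>\<beta>\<in>{\<beta>. \<beta> \<in> {..<k} \<rightarrow>\<^sub>E UNIV \<and> (\<Sum>i<k. q ^ \<beta> i) = j}. G j)"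
proof -
  let ?S = "{\<beta>. \<beta> \<in> {..<k} \<rightarrow>\<^sub>E UNIV \<and> (\<Sum>i<k. q ^ \<beta> i) \<le> n}"
  have "?S \<subseteq> PiE {..<k} (\<lambda>_. {..n})"
  proof
    fix \<beta> assume \<beta>: "\<beta> \<in> ?S"
    have "\<beta> i \<le> n" if "i < k" for i
      using exponent_less_power_sum[OF assms that, of \<beta>] \<beta> by simp
    with \<beta> show "\<beta> \<in> PiE {..<k} (\<lambda>_. {..n})" by (auto simp: PiE_iff)
  qed
  hence "finite ?S" by (rule finite_subset) (simp add: finite_PiE)
  hence "(\<Sum>\<beta>\<in>?S. G (\<Sum>i<k. q ^ \<beta> i))
       = (\<Sum>j\<le>n. \<Sum>\<beta>\<in>{\<beta>\<in>?S. (\<Sum>i<k. q ^ \<beta> i) = j}. G (\<Sum>i<k. q ^ \<beta> i))"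
    by (rule sum.group[symmetric]) auto
  also have "\<dots> = (\<Sum>j\<le>n. \<Sum>\<beta>\<in>{\<beta>. \<beta> \<in> {..<k} \<rightarrow>\<^sub>E UNIV \<and> (\<Sum>i<k. q ^ \<beta> i) = j}. G j)"
    by (intro sum.cong refl) auto
  finally show ?thesis .
qed

lemma theta_shift_nonzero: "theta - to_fract [:c:] \<noteq> (0 :: 'a::{field,finite} poly fract)"
proof -
  have "coeff ([:0, 1:] - [:c:]) 1 \<noteq> (0::'a)" by simp
  hence "[:0, 1:] - [:c:] \<noteq> (0 :: 'a poly)" by auto
  thus ?thesis unfolding theta_def by (metis to_fract_diff to_fract_eq_0_iff)
qed

lemma BC_summand:
  fixes t :: "'a::{field,finite} poly fract"
  assumes "s \<le> n" "t \<noteq> 0"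
  shows "Cbinom n [n - s, s] * t powi (int n - 1 - int s) * BC (n - s)
       = CPi n / t * ((fps_X / carlitz_exp) $ (n - s) * t ^ (n - s) * inverse (CPi s))"
proof -
  obtain m where m: "n = s + m" using assms(1) le_Suc_ex by blast
  have "t powi (int m - 1) = t ^ m / t"
    using assms(2) by (simp add: power_int_diff)
  hence "t powi (int n - 1 - int s) = t ^ (n - s) / t"
    by (simp add: m algebra_simps)
  thus ?thesis
    using CPi_nonzero[of "n - s", where 'a='a] CPi_nonzero[of s, where 'a='a] assms(2)
    by (simp add: Cbinom_def BC_def field_simps)
qed

(* The recursion for BC(n), valid for every n: apply scaled_quotient_coeff to
   B = z/e_C and P = e_C^(q-1), and insert the coefficients of P from carlitz_exp_power_nth. *)
lemma BC_recursion:
  fixes c :: "'a::{field,finite}"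
  shows "(1 - (theta - to_fract [:c:]) ^ n) * (BC n :: 'a poly fract) =
       (\<Sum>\<beta>\<in>{\<beta>. \<beta> \<in> {..<CARD('a) - 1} \<rightarrow>\<^sub>E UNIV \<and> qabs TYPE('a) \<beta> \<le> n}.
          Cbinom n [n - qabs TYPE('a) \<beta>, qabs TYPE('a) \<beta>]
          * (theta - to_fract [:c:]) powi (int n - 1 - int (qabs TYPE('a) \<beta>))
          * BC (n - qabs TYPE('a) \<beta>))"
proof -
  define q k where "q = CARD('a)" and "k = q - 1"
  define t :: "'a poly fract" where "t = theta - to_fract [:c:]"
  define e B P where "e = (carlitz_exp :: 'a poly fract fps)" and "B = fps_X / e" and "P = e ^ k"
  define \<Gamma> where "\<Gamma> j = {\<beta>. \<beta> \<in> {..<k} \<rightarrow>\<^sub>E UNIV \<and> (\<Sum>i<k. q ^ \<beta> i) = j}" for j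
  have q2: "2 \<le> q" using card_field_ge_2[where 'a='a] by (simp add: q_def)
  have t0: "t \<noteq> 0" unfolding t_def by (rule theta_shift_nonzero)
  have qabs_eq: "qabs TYPE('a) \<beta> = (\<Sum>i<k. q ^ \<beta> i)" for \<beta>
    by (simp add: qabs_def k_def q_def)
  have "e oo (fps_const t * fps_X) = fps_const t * e + e * P"
    using q2 by (simp add: e_def P_def k_def q_def t_def carlitz_exp_functional_equation
                      flip: power_Suc)
  hence coeff: "t * B $ n - t ^ Suc n * B $ n = (\<Sum>j\<le>n. P $ j * (t ^ (n - j) * B $ (n - j)))"
    by (intro scaled_quotient_coeff) (simp_all add: B_def e_def carlitz_quotient_mult carlitz_exp_nonzero)
  have "(\<Sum>\<beta>\<in>{\<beta>. \<beta> \<in> {..<k} \<rightarrow>\<^sub>E UNIV \<and> (\<Sum>i<k. q ^ \<beta> i) \<le> n}.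
          Cbinom n [n - (\<Sum>i<k. q ^ \<beta> i), \<Sum>i<k. q ^ \<beta> i] * t powi (int n - 1 - int (\<Sum>i<k. q ^ \<beta> i))
          * BC (n - (\<Sum>i<k. q ^ \<beta> i)))
      = (\<Sum>\<beta>\<in>{\<beta>. \<beta> \<in> {..<k} \<rightarrow>\<^sub>E UNIV \<and> (\<Sum>i<k. q ^ \<beta> i) \<le> n}.
          CPi n / t * (B $ (n - (\<Sum>i<k. q ^ \<beta> i)) * t ^ (n - (\<Sum>i<k. q ^ \<beta> i)) * inverse (CPi (\<Sum>i<k. q ^ \<beta> i))))"
    unfolding B_def e_def using t0 by (intro sum.cong refl BC_summand) auto
  also have "\<dots> = (\<Sum>j\<le>n. \<Sum>\<beta>\<in>\<Gamma> j. CPi n / t * (B $ (n - j) * t ^ (n - j) * inverse (CPi j)))"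
    unfolding \<Gamma>_def by (rule sum_by_power_sum[OF q2])
  also have "\<dots> = (\<Sum>j\<le>n. CPi n / t * (P $ j * (t ^ (n - j) * B $ (n - j))))"
  proof (intro sum.cong refl)
    fix j
    have "P $ j = (\<Sum>\<beta>\<in>\<Gamma> j. inverse (CPi j))"
      using q2 by (simp add: P_def e_def \<Gamma>_def k_def q_def carlitz_exp_power_nth)
    thus "(\<Sum>\<beta>\<in>\<Gamma> j. CPi n / t * (B $ (n - j) * t ^ (n - j) * inverse (CPi j)))
        = CPi n / t * (P $ j * (t ^ (n - j) * B $ (n - j)))"
      by (simp add: mult_ac)
  qed
  also have "\<dots> = CPi n / t * (t * B $ n - t ^ Suc n * B $ n)"
    by (simp only: coeff flip: sum_distrib_left)
  also have "\<dots> = (1 - t ^ n) * BC n"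
    using t0 by (simp add: BC_def B_def e_def field_simps)
  finally show ?thesis by (simp add: qabs_eq t_def k_def q_def)
qed

(* Proposition 3.7: BC(0) = 1 and the recursion; the latter is BC_recursion specialised
   to positive n divisible by q - 1. *)
theorem proposition3p7:
  assumes q3: "CARD('a::{field,finite}) \<ge> 3"
  shows "(BC 0 :: 'a poly fract) = 1 \<and>
    (\<forall>n (c::'a). n > 0 \<longrightarrow> (CARD('a) - 1) dvd n \<longrightarrow>
       (1 - (theta - to_fract [:c:]) ^ n) * (BC n :: 'a poly fract) =
       (\<Sum>\<beta>\<in>{\<beta>. \<beta> \<in> {..<CARD('a) - 1} \<rightarrow>\<^sub>E UNIV \<and> qabs TYPE('a) \<beta> \<le> n}.
          Cbinom n [n - qabs TYPE('a) \<beta>, qabs TYPE('a) \<beta>]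
          * (theta - to_fract [:c:]) powi (int n - 1 - int (qabs TYPE('a) \<beta>))
          * BC (n - qabs TYPE('a) \<beta>)))"
  using BC_0 BC_recursion by blast

end
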